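(* Let $0\le s<r<n$, let $t\ge 4$ be an integer, and let $x$ be any vertex of $G(n,r,s)$. Then $$0\le\frac{\operatorname{hom}(C_t,G(n,r,s))-\operatorname{mon}(C_t,G(n,r,s))}{\operatorname{hom}(C_t,G(n,r,s))}\le t\sum_{k=2}^{t-2}\frac{P^k(x,x)\,P^{t-k}(x,x)}{P^t(x,x)}.$$
   Context: For integers $0\le s<r<n$, $G(n,r,s)$ is the simple graph whose vertices are the $r$-element subsets of $\{1,\dots,n\}$, with $x,y$ adjacent iff $|x\cap y|=s$; it is vertex-transitive and regular of degree $N_1=\binom{r}{s}\binom{n-r}{r-s}$. $C_t$ is the cycle on $t$ vertices; $\operatorname{hom}$ and $\operatorname{mon}$ count homomorphisms and injective homomorphisms. $P^k(x,y)$ denotes the $k$-step transition probability from $x$ to $y$ of the simple random walk on $G(n,r,s)$ (at each step move to a uniformly random neighbour of the current vertex). *)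

theory Defs
  imports Complex_Main "HOL-Library.FuncSet"
begin

definition gj_vertices :: "nat \<Rightarrow> nat \<Rightarrow> nat set set" where
  "gj_vertices n r = {A. A \<subseteq> {1..n} \<and> card A = r}"

definition gj_adj :: "nat \<Rightarrow> nat set \<Rightarrow> nat set \<Rightarrow> bool" where
  "gj_adj s x y \<longleftrightarrow> card (x \<inter> y) = s"

definition cycle_homs :: "nat \<Rightarrow> 'a set \<Rightarrow> ('a \<Rightarrow> 'a \<Rightarrow> bool) \<Rightarrow> (nat \<Rightarrow> 'a) set" where
  "cycle_homs t V E = {f \<in> {0..<t} \<rightarrow>\<^sub>E V. \<forall>i<t. E (f i) (f (Suc i mod t))}"

definition hom_cycle :: "nat \<Rightarrow> 'a set \<Rightarrow> ('a \<Rightarrow> 'a \<Rightarrow> bool) \<Rightarrow> nat" where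
  "hom_cycle t V E = card (cycle_homs t V E)"

definition mon_cycle :: "nat \<Rightarrow> 'a set \<Rightarrow> ('a \<Rightarrow> 'a \<Rightarrow> bool) \<Rightarrow> nat" where
  "mon_cycle t V E = card {f \<in> cycle_homs t V E. inj_on f {0..<t}}"

definition nbrs :: "'a set \<Rightarrow> ('a \<Rightarrow> 'a \<Rightarrow> bool) \<Rightarrow> 'a \<Rightarrow> 'a set" where
  "nbrs V E x = {y \<in> V. E x y}"

fun walk_prob :: "'a set \<Rightarrow> ('a \<Rightarrow> 'a \<Rightarrow> bool) \<Rightarrow> nat \<Rightarrow> 'a \<Rightarrow> 'a \<Rightarrow> real" where
  "walk_prob V E 0 x y = (if x = y then 1 else 0)"
| "walk_prob V E (Suc k) x y =
     (\<Sum>z\<in>nbrs V E x. walk_prob V E k z y) / real (card (nbrs V E x))"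

end

theory Submission
  imports Defs
begin

text \<open>A homomorphism \<open>C\<^sub>t \<rightarrow> G\<close> is a closed walk of length \<open>t\<close>; it fails to be injective
  exactly when two of its vertices \<open>i < i + k\<close> coincide, and since \<open>G\<close> has no loops \<open>2 \<le> k \<le> t - 2\<close>.
  Cutting the cycle there gives two closed walks of lengths \<open>k\<close> and \<open>t - k\<close> through a common
  vertex, so a union bound over the \<open>t\<close> choices of \<open>i\<close> and over \<open>k\<close> bounds the non-injective
  homomorphisms by \<open>t \<Sum>\<^sub>k \<Sum>\<^sub>v W\<^sub>k(v) W\<^sub>t\<^sub>-\<^sub>k(v)\<close>, while \<open>hom = \<Sum>\<^sub>v W\<^sub>t(v)\<close>.
  In a vertex-transitive graph the closed-walk counts \<open>W\<^sub>k(v)\<close> do not depend on \<open>v\<close>, and the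
  graph is regular of some degree \<open>d\<close>, so \<open>P\<^sup>k(x,x) = W\<^sub>k / d\<^sup>k\<close> and the powers of \<open>d\<close> cancel in
  the ratio. \<open>G(n,r,s)\<close> is vertex-transitive because permutations of \<open>{1..n}\<close> act on it.\<close>

fun walk_count :: "'a set \<Rightarrow> ('a \<Rightarrow> 'a \<Rightarrow> bool) \<Rightarrow> nat \<Rightarrow> 'a \<Rightarrow> 'a \<Rightarrow> nat" where
  "walk_count V E 0 x y = (if x = y then 1 else 0)"
| "walk_count V E (Suc k) x y = (\<Sum>z\<in>nbrs V E x. walk_count V E k z y)"

definition walks :: "'a set \<Rightarrow> ('a \<Rightarrow> 'a \<Rightarrow> bool) \<Rightarrow> nat \<Rightarrow> 'a \<Rightarrow> 'a \<Rightarrow> (nat \<Rightarrow> 'a) set" where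
  "walks V E k v w = {f \<in> {0..k} \<rightarrow>\<^sub>E V. f 0 = v \<and> f k = w \<and> (\<forall>i<k. E (f i) (f (Suc i)))}"

lemma finite_walks: "finite V \<Longrightarrow> finite (walks V E k v w)"
  unfolding walks_def by (rule finite_subset[OF _ finite_PiE[of "{0..k}" "\<lambda>_. V"]]) auto

lemma finite_nbrs: "finite V \<Longrightarrow> finite (nbrs V E x)"
  unfolding nbrs_def by auto

lemma finite_cycle_homs: "finite V \<Longrightarrow> finite (cycle_homs t V E)"
  unfolding cycle_homs_def by (rule finite_subset[OF _ finite_PiE[of "{0..<t}" "\<lambda>_. V"]]) auto

definition walk_cons :: "nat \<Rightarrow> 'a \<Rightarrow> (nat \<Rightarrow> 'a) \<Rightarrow> nat \<Rightarrow> 'a" where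
  "walk_cons k v g = (\<lambda>i. if i = 0 then v else if i \<le> Suc k then g (i - 1) else undefined)"

lemma walks_0: "walks V E 0 v w = (if v = w \<and> v \<in> V then {\<lambda>i. if i = 0 then v else undefined} else {})"
  unfolding walks_def by (auto simp: PiE_def extensional_def)

lemma walks_Suc:
  assumes "v \<in> V"
  shows "walks V E (Suc k) v w = (\<lambda>(z, g). walk_cons k v g) ` Sigma (nbrs V E v) (\<lambda>z. walks V E k z w)"
proof
  show "walks V E (Suc k) v w \<subseteq> (\<lambda>(z, g). walk_cons k v g) ` Sigma (nbrs V E v) (\<lambda>z. walks V E k z w)"
  proof
    fix f assume f: "f \<in> walks V E (Suc k) v w"
    define g where "g = (\<lambda>i. if i \<le> k then f (Suc i) else undefined)"
    have "f = walk_cons k v g"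
    proof
      fix i show "f i = walk_cons k v g i"
        using f unfolding walk_cons_def g_def walks_def
        by (cases i) (auto simp: PiE_def extensional_def)
    qed
    moreover have "(f 1, g) \<in> Sigma (nbrs V E v) (\<lambda>z. walks V E k z w)"
      using f unfolding g_def walks_def nbrs_def by (auto simp: PiE_def extensional_def)
    ultimately show "f \<in> (\<lambda>(z, g). walk_cons k v g) ` Sigma (nbrs V E v) (\<lambda>z. walks V E k z w)"
      by force
  qed
next
  show "(\<lambda>(z, g). walk_cons k v g) ` Sigma (nbrs V E v) (\<lambda>z. walks V E k z w) \<subseteq> walks V E (Suc k) v w"
  proof clarify
    fix z g assume z: "z \<in> nbrs V E v" and g: "g \<in> walks V E k z w"
    have "E (walk_cons k v g i) (walk_cons k v g (Suc i))" if "i < Suc k" for i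
      using z g that unfolding walk_cons_def walks_def nbrs_def by (cases i) auto
    then show "walk_cons k v g \<in> walks V E (Suc k) v w"
      using z g assms unfolding walk_cons_def walks_def by (auto simp: PiE_def extensional_def)
  qed
qed

lemma inj_on_walk_cons: "inj_on (\<lambda>(z, g). walk_cons k v g) (Sigma A (\<lambda>z. walks V E k z w))"
proof (rule inj_onI, clarify)
  fix z g z' g'
  assume g: "g \<in> walks V E k z w" and g': "g' \<in> walks V E k z' w"
    and eq: "walk_cons k v g = walk_cons k v g'"
  have "g i = g' i" for i
  proof (cases "i \<le> k")
    case True
    then show ?thesis using fun_cong[OF eq, of "Suc i"] by (simp add: walk_cons_def)
  next
    case False
    then show ?thesis using g g' unfolding walks_def by (auto simp: PiE_def extensional_def)
  qed
  then have "g = g'" by blast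
  moreover from this have "z = z'" using g g' unfolding walks_def by auto
  ultimately show "z = z' \<and> g = g'" by simp
qed

lemma card_walks:
  assumes "finite V" and "v \<in> V"
  shows "card (walks V E k v w) = walk_count V E k v w"
  using assms(2)
proof (induction k arbitrary: v)
  case 0
  then show ?case by (simp add: walks_0)
next
  case (Suc k)
  have "card (walks V E (Suc k) v w) = card (Sigma (nbrs V E v) (\<lambda>z. walks V E k z w))"
    unfolding walks_Suc[OF Suc.prems] by (rule card_image[OF inj_on_walk_cons])
  also have "\<dots> = (\<Sum>z\<in>nbrs V E v. card (walks V E k z w))"
    using assms(1) by (simp add: finite_nbrs finite_walks)
  also have "\<dots> = (\<Sum>z\<in>nbrs V E v. walk_count V E k z w)"
    by (rule sum.cong) (auto simp: nbrs_def Suc.IH)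
  finally show ?case by simp
qed

lemma cycle_homs_eq_restrict_closed_walks:
  assumes "0 < t"
  shows "cycle_homs t V E = (\<lambda>g. restrict g {0..<t}) ` (\<Union>v\<in>V. walks V E t v v)"
proof
  show "cycle_homs t V E \<subseteq> (\<lambda>g. restrict g {0..<t}) ` (\<Union>v\<in>V. walks V E t v v)"
  proof
    fix f assume f: "f \<in> cycle_homs t V E"
    define g where "g = (\<lambda>i. if i < t then f i else if i = t then f 0 else undefined)"
    have "restrict g {0..<t} = f"
      using f unfolding g_def cycle_homs_def by (auto simp: PiE_def extensional_def)
    moreover have "f 0 \<in> V" using f assms unfolding cycle_homs_def by auto
    moreover have "E (g i) (g (Suc i))" if "i < t" for i
      using f that unfolding g_def cycle_homs_def by (cases "Suc i = t") auto
    then have "g \<in> walks V E t (f 0) (f 0)"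
      using f assms unfolding walks_def g_def cycle_homs_def by (auto simp: PiE_def extensional_def Pi_def)
    ultimately show "f \<in> (\<lambda>g. restrict g {0..<t}) ` (\<Union>v\<in>V. walks V E t v v)" by blast
  qed
next
  show "(\<lambda>g. restrict g {0..<t}) ` (\<Union>v\<in>V. walks V E t v v) \<subseteq> cycle_homs t V E"
  proof clarify
    fix g v assume g: "g \<in> walks V E t v v"
    have "E (g i) (g (Suc i mod t))" if "i < t" for i
      using g that by (cases "Suc i = t") (auto simp: walks_def)
    then show "restrict g {0..<t} \<in> cycle_homs t V E"
      using g assms unfolding cycle_homs_def walks_def by auto
  qed
qed

lemma inj_on_restrict_closed_walks:
  assumes "0 < t"
  shows "inj_on (\<lambda>g. restrict g {0..<t}) (\<Union>v\<in>V. walks V E t v v)"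
proof (rule inj_onI)
  fix g g' assume g: "g \<in> (\<Union>v\<in>V. walks V E t v v)" and g': "g' \<in> (\<Union>v\<in>V. walks V E t v v)"
    and eq: "restrict g {0..<t} = restrict g' {0..<t}"
  have "g i = g' i" for i
  proof -
    consider "i < t" | "i = t" | "t < i" by linarith
    then show ?thesis
    proof cases
      case 1
      then show ?thesis using fun_cong[OF eq, of i] by simp
    next
      case 2
      have "g 0 = g' 0" using fun_cong[OF eq, of 0] assms by simp
      then show ?thesis using 2 g g' unfolding walks_def by auto
    next
      case 3
      then show ?thesis using g g' unfolding walks_def by (auto simp: PiE_def extensional_def)
    qed
  qed
  then show "g = g'" by blast
qed

lemma card_cycle_homs:
  assumes "finite V" and "0 < t"
  shows "card (cycle_homs t V E) = (\<Sum>v\<in>V. walk_count V E t v v)"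
proof -
  have "card (cycle_homs t V E) = card (\<Union>v\<in>V. walks V E t v v)"
    unfolding cycle_homs_eq_restrict_closed_walks[OF assms(2)]
    by (rule card_image[OF inj_on_restrict_closed_walks[OF assms(2)]])
  also have "\<dots> = (\<Sum>v\<in>V. card (walks V E t v v))"
    by (rule card_UN_disjoint) (auto simp: assms(1) finite_walks, auto simp: walks_def)
  also have "\<dots> = (\<Sum>v\<in>V. walk_count V E t v v)"
    by (rule sum.cong) (auto simp: card_walks assms(1))
  finally show ?thesis .
qed

definition cycle_arc :: "nat \<Rightarrow> nat \<Rightarrow> nat \<Rightarrow> (nat \<Rightarrow> 'a) \<Rightarrow> nat \<Rightarrow> 'a" where
  "cycle_arc t i l f = (\<lambda>m. if m \<le> l then f ((i + m) mod t) else undefined)"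

lemma cycle_arc_in_walks:
  assumes f: "f \<in> cycle_homs t V E" and "i < t"
  shows "cycle_arc t i l f \<in> walks V E l (f i) (f ((i + l) mod t))"
proof -
  have t: "0 < t" using assms(2) by simp
  have "E (f ((i + m) mod t)) (f ((i + Suc m) mod t))" for m
  proof -
    have "E (f ((i + m) mod t)) (f (Suc ((i + m) mod t) mod t))"
      using f t unfolding cycle_homs_def by simp
    then show ?thesis by (simp add: mod_Suc_eq)
  qed
  then show ?thesis
    using f t \<open>i < t\<close> unfolding walks_def cycle_arc_def cycle_homs_def
    by (auto simp: PiE_def extensional_def Pi_def)
qed

lemma cycle_arcs_determine_cycle_hom:
  assumes f: "f \<in> cycle_homs t V E" and f': "f' \<in> cycle_homs t V E" and "i < t" and "k \<le> t"
    and arc1: "cycle_arc t i k f = cycle_arc t i k f'"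
    and arc2: "cycle_arc t (i + k) (t - k) f = cycle_arc t (i + k) (t - k) f'"
  shows "f = f'"
proof
  fix j
  show "f j = f' j"
  proof (cases "j < t")
    case False
    then show ?thesis using f f' unfolding cycle_homs_def by (auto simp: PiE_def extensional_def)
  next
    case True
    define m where "m = (j + t - i) mod t"
    have "(i + m) mod t = (i + (j + t - i)) mod t" unfolding m_def by (rule mod_add_right_eq)
    also have "\<dots> = j" using True \<open>i < t\<close> by simp
    finally have j: "j = (i + m) mod t" by simp
    show ?thesis
    proof (cases "m \<le> k")
      case True
      then show ?thesis using fun_cong[OF arc1, of m] j by (simp add: cycle_arc_def)
    next
      case False
      have "m < t" using \<open>j < t\<close> unfolding m_def by simp
      then have "m - k \<le> t - k" and "(i + k + (m - k)) mod t = j" using False j by auto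
      then show ?thesis using fun_cong[OF arc2, of "m - k"] by (simp add: cycle_arc_def)
    qed
  qed
qed

lemma card_cycle_homs_repeat_le:
  assumes "finite V" and "i + k < t"
  shows "card {f \<in> cycle_homs t V E. f i = f (i + k)}
         \<le> (\<Sum>v\<in>V. walk_count V E k v v * walk_count V E (t - k) v v)"
proof -
  let ?B = "{f \<in> cycle_homs t V E. f i = f (i + k)}"
  let ?S = "Sigma V (\<lambda>v. walks V E k v v \<times> walks V E (t - k) v v)"
  let ?\<mu> = "\<lambda>f. (f i, cycle_arc t i k f, cycle_arc t (i + k) (t - k) f)"
  have into: "?\<mu> ` ?B \<subseteq> ?S"
  proof (rule image_subsetI)
    fix f assume "f \<in> ?B"
    then have f: "f \<in> cycle_homs t V E" and rep: "f i = f (i + k)" by auto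
    have "(i + k + (t - k)) mod t = i" using assms(2) by (simp add: add.commute)
    then show "?\<mu> f \<in> ?S"
      using cycle_arc_in_walks[OF f, of i k] cycle_arc_in_walks[OF f, of "i + k" "t - k"]
        f rep assms(2) unfolding cycle_homs_def by (auto simp: Pi_def)
  qed
  have inj: "inj_on ?\<mu> ?B"
  proof (rule inj_onI)
    fix f f' assume "f \<in> ?B" "f' \<in> ?B" and eq: "?\<mu> f = ?\<mu> f'"
    then show "f = f'"
      using cycle_arcs_determine_cycle_hom[of f t V E f' i k] assms(2) by simp
  qed
  have "card ?B \<le> card ?S"
    using card_inj_on_le[OF inj into] assms(1) by (simp add: finite_walks)
  also have "card ?S = (\<Sum>v\<in>V. card (walks V E k v v) * card (walks V E (t - k) v v))"
    using assms(1) by (simp add: finite_walks card_cartesian_product)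
  also have "\<dots> = (\<Sum>v\<in>V. walk_count V E k v v * walk_count V E (t - k) v v)"
    by (rule sum.cong) (auto simp: card_walks assms(1))
  finally show ?thesis .
qed

lemma non_inj_cycle_hom_repeat:
  assumes irr: "\<forall>y\<in>V. \<not> E y y" and f: "f \<in> cycle_homs t V E" and ni: "\<not> inj_on f {0..<t}"
  obtains i k where "k \<in> {2..t-2}" and "i + k < t" and "f i = f (i + k)"
proof -
  have fE: "\<And>j. j < t \<Longrightarrow> E (f j) (f (Suc j mod t))" and fV: "\<And>j. j < t \<Longrightarrow> f j \<in> V"
    using f unfolding cycle_homs_def by auto
  obtain a b where ab: "a < b" "b < t" "f a = f b"
    using ni unfolding inj_on_def by (metis atLeastLessThan_iff linorder_neqE_nat)
  have "b \<noteq> Suc a"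
  proof
    assume "b = Suc a"
    then have "E (f a) (f a)" using fE[of a] ab by simp
    then show False using irr fV ab by auto
  qed
  moreover have "\<not> (a = 0 \<and> b = t - 1)"
  proof
    assume h: "a = 0 \<and> b = t - 1"
    then have "Suc b mod t = a" using ab by simp
    then have "E (f b) (f b)" using fE[of b] ab by simp
    then show False using irr fV ab by auto
  qed
  ultimately have "b - a \<in> {2..t-2}" using ab by auto
  then show ?thesis using that[of "b - a" a] ab by auto
qed

lemma card_non_inj_cycle_homs_le:
  assumes fin: "finite V" and irr: "\<forall>y\<in>V. \<not> E y y"
  shows "card {f \<in> cycle_homs t V E. \<not> inj_on f {0..<t}}
     \<le> t * (\<Sum>k\<in>{2..t-2}. \<Sum>v\<in>V. walk_count V E k v v * walk_count V E (t - k) v v)"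
proof -
  define B where "B = (\<lambda>i k. {f \<in> cycle_homs t V E. i + k < t \<and> f i = f (i + k)})"
  have "{f \<in> cycle_homs t V E. \<not> inj_on f {0..<t}} \<subseteq> (\<Union>i\<in>{0..<t}. \<Union>k\<in>{2..t-2}. B i k)"
  proof clarify
    fix f assume f: "f \<in> cycle_homs t V E" and "\<not> inj_on f {0..<t}"
    then obtain i k where "k \<in> {2..t-2}" "i + k < t" "f i = f (i + k)"
      using non_inj_cycle_hom_repeat[of V E f t] irr by blast
    then show "f \<in> (\<Union>i\<in>{0..<t}. \<Union>k\<in>{2..t-2}. B i k)"
      using f unfolding B_def by force
  qed
  then have "card {f \<in> cycle_homs t V E. \<not> inj_on f {0..<t}}
      \<le> card (\<Union>i\<in>{0..<t}. \<Union>k\<in>{2..t-2}. B i k)"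
    by (rule card_mono[rotated]) (auto intro: finite_subset[OF _ finite_cycle_homs[OF fin]] simp: B_def)
  also have "\<dots> \<le> (\<Sum>i\<in>{0..<t}. \<Sum>k\<in>{2..t-2}. card (B i k))"
    by (rule order_trans[OF card_UN_le sum_mono]) (simp_all add: card_UN_le)
  also have "\<dots> \<le> (\<Sum>i\<in>{0..<t}. \<Sum>k\<in>{2..t-2}. \<Sum>v\<in>V. walk_count V E k v v * walk_count V E (t - k) v v)"
  proof (intro sum_mono)
    fix i k
    show "card (B i k) \<le> (\<Sum>v\<in>V. walk_count V E k v v * walk_count V E (t - k) v v)"
    proof (cases "i + k < t")
      case True
      then show ?thesis using card_cycle_homs_repeat_le[OF fin True] by (simp add: B_def)
    qed (simp add: B_def)
  qed
  finally show ?thesis by simp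
qed

definition graph_aut :: "'a set \<Rightarrow> ('a \<Rightarrow> 'a \<Rightarrow> bool) \<Rightarrow> ('a \<Rightarrow> 'a) \<Rightarrow> bool" where
  "graph_aut V E \<sigma> \<longleftrightarrow> bij_betw \<sigma> V V \<and> (\<forall>a\<in>V. \<forall>b\<in>V. E (\<sigma> a) (\<sigma> b) = E a b)"

definition vertex_transitive :: "'a set \<Rightarrow> ('a \<Rightarrow> 'a \<Rightarrow> bool) \<Rightarrow> bool" where
  "vertex_transitive V E \<longleftrightarrow> (\<forall>x\<in>V. \<forall>y\<in>V. \<exists>\<sigma>. graph_aut V E \<sigma> \<and> \<sigma> x = y)"

lemma nbrs_graph_aut:
  assumes "graph_aut V E \<sigma>" and "v \<in> V"
  shows "nbrs V E (\<sigma> v) = \<sigma> ` nbrs V E v"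
proof -
  have "\<sigma> ` V = V" and pres: "\<forall>a\<in>V. \<forall>b\<in>V. E (\<sigma> a) (\<sigma> b) = E a b"
    using assms(1) by (auto simp: graph_aut_def bij_betw_def)
  then show ?thesis using assms(2) unfolding nbrs_def by force
qed

lemma card_nbrs_graph_aut:
  assumes "graph_aut V E \<sigma>" and "v \<in> V"
  shows "card (nbrs V E (\<sigma> v)) = card (nbrs V E v)"
proof -
  have "inj_on \<sigma> (nbrs V E v)"
    using assms(1) by (auto simp: graph_aut_def bij_betw_def nbrs_def intro: inj_on_subset)
  then show ?thesis by (simp add: nbrs_graph_aut[OF assms] card_image)
qed

lemma walk_count_graph_aut:
  assumes aut: "graph_aut V E \<sigma>" and "v \<in> V" and "w \<in> V"
  shows "walk_count V E k (\<sigma> v) (\<sigma> w) = walk_count V E k v w"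
  using \<open>v \<in> V\<close>
proof (induction k arbitrary: v)
  case 0
  have "inj_on \<sigma> V" using aut by (simp add: graph_aut_def bij_betw_def)
  then show ?case using 0 \<open>w \<in> V\<close> by (auto simp: inj_on_def)
next
  case (Suc k)
  have inj: "inj_on \<sigma> (nbrs V E v)"
    using aut by (auto simp: graph_aut_def bij_betw_def nbrs_def intro: inj_on_subset)
  have "walk_count V E (Suc k) (\<sigma> v) (\<sigma> w) = (\<Sum>z\<in>nbrs V E v. walk_count V E k (\<sigma> z) (\<sigma> w))"
    by (simp add: nbrs_graph_aut[OF aut Suc.prems] sum.reindex[OF inj])
  also have "\<dots> = (\<Sum>z\<in>nbrs V E v. walk_count V E k z w)"
    by (rule sum.cong) (auto simp: nbrs_def Suc.IH)
  finally show ?case by simp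
qed

lemma walk_prob_regular:
  assumes "\<forall>v\<in>V. card (nbrs V E v) = d" and "v \<in> V"
  shows "walk_prob V E k v w = real (walk_count V E k v w) / real d ^ k"
  using \<open>v \<in> V\<close>
proof (induction k arbitrary: v)
  case (Suc k)
  have "walk_prob V E (Suc k) v w = (\<Sum>z\<in>nbrs V E v. real (walk_count V E k z w) / real d ^ k) / real d"
    using assms(1) Suc.prems by (simp add: Suc.IH nbrs_def)
  also have "\<dots> = real (walk_count V E (Suc k) v w) / real d ^ Suc k"
    by (simp add: sum_divide_distrib[symmetric])
  finally show ?case .
qed simp

lemma walk_prob_nonneg: "0 \<le> walk_prob V E k x y"
  by (induction k arbitrary: x) (auto intro!: sum_nonneg divide_nonneg_nonneg)

lemma vertex_transitive_card_nbrs: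
  assumes "vertex_transitive V E" and "x \<in> V" and "v \<in> V"
  shows "card (nbrs V E v) = card (nbrs V E x)"
  using assms card_nbrs_graph_aut unfolding vertex_transitive_def by metis

lemma vertex_transitive_walk_count:
  assumes "vertex_transitive V E" and "x \<in> V" and "v \<in> V"
  shows "walk_count V E k v v = walk_count V E k x x"
  using assms walk_count_graph_aut unfolding vertex_transitive_def by metis

lemma hom_cycle_minus_mon_cycle:
  assumes "finite V"
  shows "hom_cycle t V E - mon_cycle t V E = card {f \<in> cycle_homs t V E. \<not> inj_on f {0..<t}}"
proof -
  have "{f \<in> cycle_homs t V E. \<not> inj_on f {0..<t}}
      = cycle_homs t V E - {f \<in> cycle_homs t V E. inj_on f {0..<t}}" by auto
  then show ?thesis unfolding hom_cycle_def mon_cycle_def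
    by (simp add: card_Diff_subset finite_cycle_homs[OF assms])
qed

lemma mon_cycle_le_hom_cycle: "finite V \<Longrightarrow> mon_cycle t V E \<le> hom_cycle t V E"
  unfolding mon_cycle_def hom_cycle_def by (rule card_mono[OF finite_cycle_homs]) auto

context
  fixes V :: "'a set" and E :: "'a \<Rightarrow> 'a \<Rightarrow> bool" and x :: 'a
  assumes fin: "finite V" and vt: "vertex_transitive V E" and x: "x \<in> V"
begin

lemma vertex_transitive_hom_cycle:
  "0 < t \<Longrightarrow> hom_cycle t V E = card V * walk_count V E t x x"
  unfolding hom_cycle_def
  by (simp add: card_cycle_homs[OF fin] vertex_transitive_walk_count[OF vt x])

lemma vertex_transitive_hom_minus_mon_le:
  assumes "\<forall>y\<in>V. \<not> E y y"
  shows "hom_cycle t V E - mon_cycle t V E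
    \<le> t * (card V * (\<Sum>k\<in>{2..t-2}. walk_count V E k x x * walk_count V E (t - k) x x))"
proof -
  have "(\<Sum>v\<in>V. walk_count V E k v v * walk_count V E (t - k) v v)
      = card V * (walk_count V E k x x * walk_count V E (t - k) x x)" for k
    by (simp add: vertex_transitive_walk_count[OF vt x])
  then show ?thesis
    using card_non_inj_cycle_homs_le[of V E t, OF fin assms]
    by (simp add: hom_cycle_minus_mon_cycle[OF fin] sum_distrib_left)
qed

lemma walk_prob_ratio:
  assumes "0 < card (nbrs V E x)" and "k \<le> t"
  shows "walk_prob V E k x x * walk_prob V E (t - k) x x / walk_prob V E t x x
    = real (walk_count V E k x x) * real (walk_count V E (t - k) x x) / real (walk_count V E t x x)"
proof -
  define d where "d = card (nbrs V E x)"
  have reg: "\<forall>v\<in>V. card (nbrs V E v) = d"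
    using vertex_transitive_card_nbrs[OF vt x] by (simp add: d_def)
  have "real d ^ t = real d ^ k * real d ^ (t - k)"
    using assms(2) by (simp flip: power_add)
  then show ?thesis
    using assms(1) by (simp add: walk_prob_regular[OF reg x] d_def field_simps)
qed

theorem vertex_transitive_cycle_hom_defect_le:
  assumes irr: "\<forall>y\<in>V. \<not> E y y" and "0 < t"
  shows "(real (hom_cycle t V E) - real (mon_cycle t V E)) / real (hom_cycle t V E)
    \<le> real t * (\<Sum>k=2..t-2. walk_prob V E k x x * walk_prob V E (t - k) x x / walk_prob V E t x x)"
proof (cases "hom_cycle t V E = 0")
  case True
  then show ?thesis by (auto intro!: mult_nonneg_nonneg sum_nonneg divide_nonneg_nonneg walk_prob_nonneg)
next
  case False
  let ?W = "\<lambda>k. real (walk_count V E k x x)"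
  have hom_nat: "hom_cycle t V E = card V * walk_count V E t x x"
    using vertex_transitive_hom_cycle[OF \<open>0 < t\<close>] .
  then have "0 < card V" and "0 < ?W t" using False by auto
  have hom: "real (hom_cycle t V E) = real (card V) * ?W t"
    using hom_nat by simp
  have "0 < card (nbrs V E x)"
  proof (rule ccontr)
    assume "\<not> 0 < card (nbrs V E x)"
    then have "nbrs V E x = {}" using finite_nbrs[OF fin] by auto
    then have "?W t = 0" using \<open>0 < t\<close> by (cases t) auto
    then show False using \<open>0 < ?W t\<close> by simp
  qed
  then have ratio: "(\<Sum>k=2..t-2. walk_prob V E k x x * walk_prob V E (t - k) x x / walk_prob V E t x x)
      = (\<Sum>k=2..t-2. ?W k * ?W (t - k)) / ?W t"
    unfolding sum_divide_distrib by (intro sum.cong) (auto simp: walk_prob_ratio)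
  have num: "real (hom_cycle t V E) - real (mon_cycle t V E)
      \<le> real t * (real (card V) * (\<Sum>k\<in>{2..t-2}. ?W k * ?W (t - k)))"
    using vertex_transitive_hom_minus_mon_le[OF irr, of t] mon_cycle_le_hom_cycle[OF fin, of t E]
    by (simp flip: of_nat_diff of_nat_mult of_nat_sum of_nat_le_iff)
  have "(real (hom_cycle t V E) - real (mon_cycle t V E)) / real (hom_cycle t V E)
      \<le> real t * (real (card V) * (\<Sum>k\<in>{2..t-2}. ?W k * ?W (t - k))) / real (hom_cycle t V E)"
    by (rule divide_right_mono[OF num]) simp
  also have "\<dots> = real t * ((\<Sum>k=2..t-2. ?W k * ?W (t - k)) / ?W t)"
    using \<open>0 < card V\<close> by (simp add: hom)
  finally show ?thesis unfolding ratio .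
qed

end

lemma finite_gj_vertices: "finite (gj_vertices n r)"
  unfolding gj_vertices_def by (rule finite_subset[of _ "Pow {1..n}"]) auto

lemma gj_adj_irrefl: "s < r \<Longrightarrow> y \<in> gj_vertices n r \<Longrightarrow> \<not> gj_adj s y y"
  unfolding gj_vertices_def gj_adj_def by auto

lemma exists_bij_betw_image_eq:
  assumes "finite U" and "A \<subseteq> U" and "B \<subseteq> U" and "card A = card B"
  obtains \<pi> where "bij_betw \<pi> U U" and "\<pi> ` A = B"
proof -
  have fin: "finite A" "finite B" using assms finite_subset by auto
  obtain h1 where h1: "bij_betw h1 A B" using finite_same_card_bij[OF fin assms(4)] by blast
  have "card (U - A) = card (U - B)"
    using assms fin by (simp add: card_Diff_subset)
  then obtain h2 where h2: "bij_betw h2 (U - A) (U - B)"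
    using finite_same_card_bij assms(1) by blast
  define \<pi> where "\<pi> = (\<lambda>j. if j \<in> A then h1 j else h2 j)"
  have b1: "bij_betw \<pi> A B" using h1 by (rule bij_betw_cong[THEN iffD1, rotated]) (simp add: \<pi>_def)
  moreover have "bij_betw \<pi> (U - A) (U - B)"
    using h2 by (rule bij_betw_cong[THEN iffD1, rotated]) (simp add: \<pi>_def)
  ultimately have "bij_betw \<pi> (A \<union> (U - A)) (B \<union> (U - B))"
    by (rule bij_betw_combine) auto
  moreover have "A \<union> (U - A) = U" "B \<union> (U - B) = U" using assms by auto
  ultimately show ?thesis using that b1 by (simp add: bij_betw_def)
qed

lemma graph_aut_gj_image:
  assumes \<pi>: "bij_betw \<pi> {1..n} {1..n}"
  shows "graph_aut (gj_vertices n r) (gj_adj s) ((`) \<pi>)"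
proof -
  have inj: "inj_on \<pi> {1..n}" and im: "\<pi> ` {1..n} = {1..n}" using \<pi> by (auto simp: bij_betw_def)
  have card_im: "card (\<pi> ` A) = card A" if "A \<subseteq> {1..n}" for A
    using card_image[OF inj_on_subset[OF inj that]] .
  have "bij_betw ((`) \<pi>) (Pow {1..n}) (Pow {1..n})"
    using \<pi> by (rule bij_betw_Pow)
  then have "bij_betw ((`) \<pi>) (gj_vertices n r) ((`) \<pi> ` gj_vertices n r)"
    by (rule bij_betw_subset) (auto simp: gj_vertices_def)
  moreover have "(`) \<pi> ` gj_vertices n r = gj_vertices n r"
    by (rule endo_inj_surj[OF finite_gj_vertices])
      (use im card_im calculation in \<open>auto simp: gj_vertices_def bij_betw_def\<close>)
  moreover have "gj_adj s (\<pi> ` a) (\<pi> ` b) = gj_adj s a b"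
    if "a \<in> gj_vertices n r" "b \<in> gj_vertices n r" for a b
  proof -
    have ab: "a \<subseteq> {1..n}" "b \<subseteq> {1..n}" using that by (auto simp: gj_vertices_def)
    then have "card (\<pi> ` a \<inter> \<pi> ` b) = card (a \<inter> b)"
      using card_im[of "a \<inter> b"] inj_on_image_Int[OF inj ab] by auto
    then show ?thesis by (simp add: gj_adj_def)
  qed
  ultimately show ?thesis unfolding graph_aut_def by simp
qed

lemma vertex_transitive_gj: "vertex_transitive (gj_vertices n r) (gj_adj s)"
  unfolding vertex_transitive_def
proof (intro ballI)
  fix x y assume "x \<in> gj_vertices n r" "y \<in> gj_vertices n r"
  then obtain \<pi> where "bij_betw \<pi> {1..n} {1..n}" and "\<pi> ` x = y"
    using exists_bij_betw_image_eq[of "{1..n}" x y] by (auto simp: gj_vertices_def)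
  then show "\<exists>\<sigma>. graph_aut (gj_vertices n r) (gj_adj s) \<sigma> \<and> \<sigma> x = y"
    using graph_aut_gj_image by blast
qed

theorem mainTheorem4:
  fixes n r s t :: nat and x :: "nat set"
  assumes "s < r" and "r < n" and "4 \<le> t"
    and "x \<in> gj_vertices n r"
  shows "0 \<le> (real (hom_cycle t (gj_vertices n r) (gj_adj s))
                 - real (mon_cycle t (gj_vertices n r) (gj_adj s)))
              / real (hom_cycle t (gj_vertices n r) (gj_adj s))
    \<and> (real (hom_cycle t (gj_vertices n r) (gj_adj s))
                 - real (mon_cycle t (gj_vertices n r) (gj_adj s)))
              / real (hom_cycle t (gj_vertices n r) (gj_adj s))
       \<le> real t * (\<Sum>k=2..t-2.
            walk_prob (gj_vertices n r) (gj_adj s) k x x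
            * walk_prob (gj_vertices n r) (gj_adj s) (t - k) x x
            / walk_prob (gj_vertices n r) (gj_adj s) t x x)"
proof -
  have "\<forall>y\<in>gj_vertices n r. \<not> gj_adj s y y" and "0 < t"
    using gj_adj_irrefl[OF assms(1)] assms(3) by auto
  then show ?thesis
    using vertex_transitive_cycle_hom_defect_le[OF finite_gj_vertices vertex_transitive_gj assms(4)]
      mon_cycle_le_hom_cycle[OF finite_gj_vertices, of t n r "gj_adj s"]
    by simp
qed

end
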